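(* Let $\mathbf{t}$ be the Tribonacci sequence, fixed point of $0\mapsto01$, $1\mapsto02$, $2\mapsto0$. For each $k\ge1$, the sequence $\mathbf{t}$ is totally $(k,1)$-unbalanced.
   Context: For positive integers $k,C$, a sequence $\mathbf{x}$ is totally $(k,C)$-unbalanced if for every length-$k$ factor $w$ of $\mathbf{x}$ there exist two factors $u,v$ of $\mathbf{x}$ with $|u|=|v|$ and $||u|_w-|v|_w|>C$, where $|u|_w$ is the number of (possibly overlapping) occurrences of $w$ in $u$. *)

theory Defs
  imports Main
begin

text \<open>Tribonacci morphism on the alphabet {0,1,2}: 0 -> 01, 1 -> 02, 2 -> 0.
  (Letters outside {0,1,2} never occur; they are mapped to [0] only for totality.)\<close>
fun trib_morph :: "nat \<Rightarrow> nat list" where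
  "trib_morph 0 = [0, 1]"
| "trib_morph (Suc 0) = [0, 2]"
| "trib_morph _ = [0]"

definition trib_apply :: "nat list \<Rightarrow> nat list" where
  "trib_apply xs = concat (map trib_morph xs)"

text \<open>The n-th iterate of the morphism applied to the letter 0; each is a prefix of the next
  and has length at least n+1.\<close>
definition trib_iter :: "nat \<Rightarrow> nat list" where
  "trib_iter n = (trib_apply ^^ n) [0]"

text \<open>The Tribonacci word t = lim trib_iter n, the fixed point of the morphism starting with 0.\<close>
definition tribonacci :: "nat \<Rightarrow> nat" where
  "tribonacci i = trib_iter (Suc i) ! i"

definition factors :: "(nat \<Rightarrow> 'a) \<Rightarrow> 'a list set" where
  "factors x = {u. \<exists>i. u = map x [i..<i + length u]}"

definition occ :: "'a list \<Rightarrow> 'a list \<Rightarrow> nat" where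
  "occ u w = card {j. j + length w \<le> length u \<and> take (length w) (drop j u) = w}"

definition totally_unbalanced :: "nat \<Rightarrow> nat \<Rightarrow> (nat \<Rightarrow> 'a) \<Rightarrow> bool" where
  "totally_unbalanced k C x \<longleftrightarrow>
     (\<forall>w \<in> factors x. length w = k \<longrightarrow>
        (\<exists>u \<in> factors x. \<exists>v \<in> factors x. length u = length v \<and>
            \<bar>int (occ u w) - int (occ v w)\<bar> > int C))"

end

theory Submission
  imports Defs
begin

(* Write \<sigma> for the morphism and t for its fixed point. Since t = \<sigma>\<^sup>n(t), the word t is the
  concatenation of the blocks \<sigma>\<^sup>n(t\<^sub>j), which start at strictly increasing positions img_pos n j.
  Every factor w \<noteq> 0 is anchored at some level n \<ge> 2: for a suitable word x, the occurrences of w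
  are exactly the positions img_pos n j + |x|. This follows by desubstitution: after prefixing a 0
  if necessary, w is \<sigma>(w') followed by at most one 0, where w' is shorter than w apart from two
  one-letter cases, and anchoring at level n lifts from w' to w at level n + 1. Consecutive
  occurrences of an anchored w are therefore |\<sigma>\<^sup>n(t\<^sub>j)| apart. As |\<sigma>\<^sup>n(2)| + 2 \<le> |\<sigma>\<^sup>n(0)| for
  n \<ge> 2, a window of length |\<sigma>\<^sup>n(2)| + |w| contains w twice when it starts at an occurrence in
  front of a block \<sigma>\<^sup>n(2), and not at all when it starts just after the first occurrence of w.
  The factor 0 is handled by direct computation. *)

lemma trib_apply_Nil [simp]: "trib_apply [] = []"
  by (simp add: trib_apply_def)

lemma trib_apply_Cons [simp]: "trib_apply (a # xs) = trib_morph a @ trib_apply xs"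
  by (simp add: trib_apply_def)

lemma trib_apply_append [simp]: "trib_apply (xs @ ys) = trib_apply xs @ trib_apply ys"
  by (simp add: trib_apply_def)

lemma funpow_trib_apply_Nil [simp]: "(trib_apply ^^ n) [] = []"
  by (induction n) auto

lemma funpow_trib_apply_append:
  "(trib_apply ^^ n) (xs @ ys) = (trib_apply ^^ n) xs @ (trib_apply ^^ n) ys"
  by (induction n) auto

lemma trib_morph_2 [simp]: "trib_morph 2 = [0]"
  by (simp add: numeral_2_eq_2)

lemma length_trib_morph: "1 \<le> length (trib_morph a)" "length (trib_morph a) \<le> 2"
  by (cases a rule: trib_morph.cases; simp)+

lemma trib_morph_hd: "\<exists>z. trib_morph a = 0 # z"
  by (cases a rule: trib_morph.cases; simp)

lemma set_trib_apply: "set (trib_apply xs) \<subseteq> {0, 1, 2}"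
proof -
  have "set (trib_morph a) \<subseteq> {0, 1, 2}" for a
    by (cases a rule: trib_morph.cases; simp)
  then show ?thesis
    by (induction xs) auto
qed

lemma length_trib_apply_ge: "length xs \<le> length (trib_apply xs)"
proof (induction xs)
  case (Cons a xs)
  then show ?case
    using length_trib_morph(1)[of a] by simp
qed simp

lemma length_funpow_trib_apply_ge: "length xs \<le> length ((trib_apply ^^ n) xs)"
  by (induction n) (auto intro: le_trans length_trib_apply_ge)

lemma trib_apply_hd: "xs \<noteq> [] \<Longrightarrow> \<exists>u. trib_apply xs = 0 # u"
proof (cases xs)
  case (Cons a l)
  then show ?thesis
    using trib_morph_hd[of a] by auto
qed simp

lemma trib_apply_eq_Nil_iff [simp]: "trib_apply xs = [] \<longleftrightarrow> xs = []"
  using trib_apply_hd by fastforce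

lemma trib_apply_snoc_0: "\<exists>u. trib_apply xs @ [0] = 0 # u"
  using trib_apply_hd by (cases "xs = []") fastforce+

lemma length_trib_apply:
  "\<forall>a\<in>set w. a < 3 \<Longrightarrow> length (trib_apply w) = length w + length (filter (\<lambda>a. a \<noteq> 2) w)"
proof (induction w)
  case (Cons a w)
  then have "a = 0 \<or> a = 1 \<or> a = 2"
    by auto
  with Cons show ?case
    by auto
qed simp

lemma last_trib_apply: "w \<noteq> [] \<Longrightarrow> last (trib_apply w) = last (trib_morph (last w))"
  by (induction w) auto

text \<open>The appended 0 tells the image \<open>\<sigma>(2) = 0\<close> apart from the common prefix 0 of
  \<open>\<sigma>(0)\<close> and \<open>\<sigma>(1)\<close>.\<close>
lemma trib_apply_snoc_0_prefix:
  assumes "\<forall>a\<in>set x. a < 3" "\<forall>a\<in>set y. a < 3"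
    and "trib_apply y @ [0] = trib_apply x @ [0] @ z"
  shows "\<exists>z'. y = x @ z'"
  using assms
proof (induction x arbitrary: y)
  case (Cons a x)
  have "y \<noteq> []"
  proof
    assume "y = []"
    with Cons.prems(3) have "[0] = trib_morph a @ trib_apply x @ [0] @ z"
      by simp
    then have "length [0::nat] = length (trib_morph a @ trib_apply x @ [0] @ z)"
      by (rule arg_cong)
    with length_trib_morph(1)[of a] show False
      by simp
  qed
  then obtain b y' where y: "y = b # y'"
    by (cases y) auto
  obtain u v where u: "trib_apply y' @ [0] = 0 # u" and v: "trib_apply x @ [0] = 0 # v"
    using trib_apply_snoc_0 by metis
  have "trib_morph b @ 0 # u = trib_morph a @ 0 # v @ z"
    using Cons.prems(3) y u v by simp
  moreover have "a = 0 \<or> a = 1 \<or> a = 2" "b = 0 \<or> b = 1 \<or> b = 2"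
    using Cons.prems y by auto
  ultimately have "a = b" "u = v @ z"
    by auto
  then have "trib_apply y' @ [0] = trib_apply x @ [0] @ z"
    using u v by simp
  then show ?case
    using Cons.IH Cons.prems y \<open>a = b\<close> by auto
qed simp

section \<open>The fixed point and its block structure\<close>

lemma trib_iter_Suc: "trib_iter (Suc m) = trib_apply (trib_iter m)"
  by (simp add: trib_iter_def)

lemma funpow_trib_apply_trib_iter: "(trib_apply ^^ n) (trib_iter m) = trib_iter (m + n)"
  by (induction n) (auto simp: trib_iter_Suc)

lemma trib_iter_hd: "\<exists>z. trib_iter m = 0 # z"
  by (induction m) (auto simp: trib_iter_def)

lemma trib_iter_prefix_Suc: "\<exists>zs. trib_iter (Suc m) = trib_iter m @ zs"
proof (induction m)
  case 0
  then show ?case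
    by (simp add: trib_iter_def trib_apply_def)
next
  case (Suc m)
  then obtain zs where "trib_iter (Suc m) = trib_iter m @ zs"
    by blast
  then show ?case
    by (simp add: trib_iter_Suc[of "Suc m"] trib_iter_Suc[of m])
qed

lemma trib_iter_prefix: "m \<le> m' \<Longrightarrow> \<exists>zs. trib_iter m' = trib_iter m @ zs"
proof (induction m' rule: dec_induct)
  case (step n)
  then show ?case
    using trib_iter_prefix_Suc[of n] by (metis append.assoc)
qed simp

lemma length_trib_iter: "m < length (trib_iter m)"
proof (induction m)
  case (Suc m)
  obtain z where z: "trib_iter m = 0 # z"
    using trib_iter_hd by blast
  have "length (trib_iter (Suc m)) = 2 + length (trib_apply z)"
    by (simp add: trib_iter_Suc z)
  with Suc z length_trib_apply_ge[of z] show ?case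
    by simp
qed (simp add: trib_iter_def)

lemma tribonacci_eq_trib_iter_nth:
  assumes "i < length (trib_iter m)"
  shows "tribonacci i = trib_iter m ! i"
proof -
  define M where "M = max m (Suc i)"
  obtain zs where zs: "trib_iter M = trib_iter m @ zs"
    using trib_iter_prefix[of m M] M_def by auto
  obtain zs' where zs': "trib_iter M = trib_iter (Suc i) @ zs'"
    using trib_iter_prefix[of "Suc i" M] M_def by auto
  have "i < length (trib_iter (Suc i))"
    using length_trib_iter[of "Suc i"] by simp
  then have "tribonacci i = trib_iter M ! i"
    by (simp add: tribonacci_def zs' nth_append)
  also have "\<dots> = trib_iter m ! i"
    using assms by (simp add: zs nth_append)
  finally show ?thesis .
qed

lemma map_tribonacci_eq_trib_iter:
  "b \<le> length (trib_iter m) \<Longrightarrow> map tribonacci [a..<b] = drop a (take b (trib_iter m))"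
  by (rule nth_equalityI) (auto simp: tribonacci_eq_trib_iter_nth[of _ m])

lemma tribonacci_less_3: "tribonacci i < 3"
proof -
  have "i < length (trib_iter (Suc i))"
    using length_trib_iter[of "Suc i"] by simp
  then have "tribonacci i \<in> set (trib_apply (trib_iter i))"
    by (simp add: tribonacci_def trib_iter_Suc)
  then show ?thesis
    using set_trib_apply by fastforce
qed

definition trib_prefix :: "nat \<Rightarrow> nat list" where
  "trib_prefix j = map tribonacci [0..<j]"

lemma length_trib_prefix [simp]: "length (trib_prefix j) = j"
  by (simp add: trib_prefix_def)

lemma trib_prefix_add: "trib_prefix (j + m) = trib_prefix j @ map tribonacci [j..<j + m]"
  unfolding trib_prefix_def by (subst upt_add_eq_append) auto

lemma trib_prefix_eq_take: "j \<le> length (trib_iter m) \<Longrightarrow> trib_prefix j = take j (trib_iter m)"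
  using map_tribonacci_eq_trib_iter[of j m 0] by (simp add: trib_prefix_def)

text \<open>The block \<open>\<sigma>\<^sup>n(t\<^sub>j)\<close> of the factorisation \<open>t = \<sigma>\<^sup>n(t\<^sub>0) \<sigma>\<^sup>n(t\<^sub>1) \<dots>\<close> starts
  at position \<open>img_pos n j\<close> of \<open>t\<close>.\<close>
definition img_pos :: "nat \<Rightarrow> nat \<Rightarrow> nat" where
  "img_pos n j = length ((trib_apply ^^ n) (trib_prefix j))"

lemma funpow_trib_apply_trib_prefix:
  "(trib_apply ^^ n) (trib_prefix j) = trib_prefix (img_pos n j)"
proof -
  obtain zs where zs: "trib_iter j = trib_prefix j @ zs"
    using trib_prefix_eq_take[of j j] length_trib_iter[of j] by (metis append_take_drop_id less_imp_le)
  have "trib_iter (j + n) = (trib_apply ^^ n) (trib_prefix j) @ (trib_apply ^^ n) zs"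
    by (simp add: funpow_trib_apply_trib_iter[symmetric] zs funpow_trib_apply_append)
  then have "(trib_apply ^^ n) (trib_prefix j) = take (img_pos n j) (trib_iter (j + n))"
    by (simp add: img_pos_def)
  also have "\<dots> = trib_prefix (img_pos n j)"
    by (rule trib_prefix_eq_take[symmetric]) (simp add: img_pos_def \<open>trib_iter (j + n) = _\<close>)
  finally show ?thesis .
qed

lemma img_pos_add:
  "img_pos n (q + m) = img_pos n q + length ((trib_apply ^^ n) (map tribonacci [q..<q + m]))"
  "map tribonacci [img_pos n q..<img_pos n (q + m)] = (trib_apply ^^ n) (map tribonacci [q..<q + m])"
proof -
  have "trib_prefix (img_pos n (q + m))
      = trib_prefix (img_pos n q) @ (trib_apply ^^ n) (map tribonacci [q..<q + m])"
    by (simp flip: funpow_trib_apply_trib_prefix add: trib_prefix_add funpow_trib_apply_append)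
  moreover from this show "img_pos n (q + m)
      = img_pos n q + length ((trib_apply ^^ n) (map tribonacci [q..<q + m]))"
    by (metis length_append length_trib_prefix)
  ultimately show "map tribonacci [img_pos n q..<img_pos n (q + m)]
      = (trib_apply ^^ n) (map tribonacci [q..<q + m])"
    by (simp add: trib_prefix_add)
qed

lemma img_pos_0 [simp]: "img_pos n 0 = 0"
  by (simp add: img_pos_def trib_prefix_def)

lemma img_pos_Suc: "img_pos n (Suc q) = img_pos n q + length ((trib_apply ^^ n) [tribonacci q])"
  using img_pos_add(1)[of n q 1] by simp

text \<open>Not a simp rule: simp rewrites \<open>1\<close> to \<open>Suc 0\<close>, and the right-hand side then matches
  the left-hand side again.\<close>
lemma img_pos_Suc_level: "img_pos (Suc n) j = img_pos 1 (img_pos n j)"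
proof -
  have "(trib_apply ^^ Suc n) (trib_prefix j) = trib_apply (trib_prefix (img_pos n j))"
    by (simp add: funpow_trib_apply_trib_prefix)
  then show ?thesis
    unfolding img_pos_def[of "Suc n"] img_pos_def[of 1] by simp
qed

lemma strict_mono_img_pos: "strict_mono (img_pos n)"
  unfolding strict_mono_Suc_iff
  using length_funpow_trib_apply_ge[of "[_]" n] by (simp add: img_pos_Suc Suc_le_eq)

lemma tribonacci_segment:
  "q \<le> q' \<Longrightarrow> map tribonacci [img_pos 1 q..<img_pos 1 q'] = trib_apply (map tribonacci [q..<q'])"
  using img_pos_add(2)[of 1 q "q' - q"] by simp

lemma tribonacci_block:
  "img_pos 1 (Suc q) = img_pos 1 q + length (trib_morph (tribonacci q))"
  "map tribonacci [img_pos 1 q..<img_pos 1 (Suc q)] = trib_morph (tribonacci q)"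
  using img_pos_add[of 1 q 1] by simp_all

lemma strict_mono_interval:
  fixes f :: "nat \<Rightarrow> nat"
  assumes "strict_mono f" "f 0 = 0"
  shows "\<exists>q. f q \<le> p \<and> p < f (Suc q)"
proof (induction p)
  case 0
  show ?case
    using assms strict_monoD[OF assms(1), of 0 1] by auto
next
  case (Suc p)
  then obtain q where q: "f q \<le> p" "p < f (Suc q)"
    by blast
  show ?case
  proof (cases "Suc p < f (Suc q)")
    case True
    with q show ?thesis
      by (intro exI[of _ q]) simp
  next
    case False
    with q have "Suc p = f (Suc q)"
      by simp
    with strict_monoD[OF assms(1), of "Suc q" "Suc (Suc q)"] show ?thesis
      by (intro exI[of _ "Suc q"]) simp
  qed
qed

lemma tribonacci_img_pos_1: "tribonacci (img_pos 1 q) = 0"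
proof -
  have "img_pos 1 q < img_pos 1 (Suc q)"
    using strict_mono_img_pos by (rule strict_monoD) simp
  then have "tribonacci (img_pos 1 q) = map tribonacci [img_pos 1 q..<img_pos 1 (Suc q)] ! 0"
    by simp
  then show ?thesis
    using tribonacci_block(2) trib_morph_hd by (metis nth_Cons_0)
qed

lemma tribonacci_position_cases:
  obtains (first) q where "p = img_pos 1 q" "tribonacci p = 0"
  | (second) q where "p = Suc (img_pos 1 q)" "Suc p = img_pos 1 (Suc q)" "tribonacci p \<noteq> 0"
      "tribonacci (Suc p) = 0"
proof -
  obtain q where q: "img_pos 1 q \<le> p" "p < img_pos 1 (Suc q)"
    using strict_mono_interval[OF strict_mono_img_pos img_pos_0] by blast
  have len: "img_pos 1 (Suc q) = img_pos 1 q + length (trib_morph (tribonacci q))"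
    by (rule tribonacci_block(1))
  show ?thesis
  proof (cases "p = img_pos 1 q")
    case False
    with q len length_trib_morph(2)[of "tribonacci q"]
    have p: "p = Suc (img_pos 1 q)" "Suc p = img_pos 1 (Suc q)"
      by linarith+
    have "tribonacci p = map tribonacci [img_pos 1 q..<img_pos 1 (Suc q)] ! 1"
      using p by simp
    also have "\<dots> = trib_morph (tribonacci q) ! 1"
      by (simp only: tribonacci_block(2))
    finally have "tribonacci p \<noteq> 0"
      using tribonacci_less_3[of q] p len
      by (cases "tribonacci q" rule: trib_morph.cases) auto
    with p tribonacci_img_pos_1[of "Suc q"] show ?thesis
      by (intro second[of q]) simp_all
  qed (use tribonacci_img_pos_1[of q] in \<open>simp add: first\<close>)
qed

lemma tribonacci_eq_0_iff: "tribonacci p = 0 \<longleftrightarrow> (\<exists>q. p = img_pos 1 q)"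
  using tribonacci_img_pos_1 by (cases p rule: tribonacci_position_cases) auto

lemma tribonacci_nonzero_Suc: "tribonacci p \<noteq> 0 \<Longrightarrow> tribonacci (Suc p) = 0"
  by (cases p rule: tribonacci_position_cases) auto

lemma tribonacci_nonzero_pred: "tribonacci p \<noteq> 0 \<Longrightarrow> 0 < p \<and> tribonacci (p - 1) = 0"
  using tribonacci_img_pos_1 by (cases p rule: tribonacci_position_cases) auto

definition occurs_at :: "nat list \<Rightarrow> nat \<Rightarrow> bool" where
  "occurs_at w p \<longleftrightarrow> map tribonacci [p..<p + length w] = w"

lemma factors_tribonacci_iff: "w \<in> factors tribonacci \<longleftrightarrow> (\<exists>p. occurs_at w p)"
  by (auto simp: factors_def occurs_at_def) metis+

lemma occurs_at_map_tribonacci: "occurs_at (map tribonacci [p..<p + m]) p"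
  by (simp add: occurs_at_def)

lemma map_tribonacci_in_factors: "map tribonacci [p..<p + m] \<in> factors tribonacci"
  using occurs_at_map_tribonacci factors_tribonacci_iff by blast

lemma occurs_at_Nil [simp]: "occurs_at [] p"
  by (simp add: occurs_at_def)

lemma occurs_at_append: "occurs_at (u @ v) p \<longleftrightarrow> occurs_at u p \<and> occurs_at v (p + length u)"
proof -
  have "[p..<p + length (u @ v)] = [p..<p + length u] @ [p + length u..<p + length u + length v]"
    using upt_add_eq_append[of p "p + length u" "length v"] by (simp add: add.assoc)
  then show ?thesis
    by (simp add: occurs_at_def append_eq_append_conv)
qed

lemma occurs_at_Cons: "occurs_at (c # w) p \<longleftrightarrow> tribonacci p = c \<and> occurs_at w (Suc p)"
  using occurs_at_append[of "[c]" w p] by (simp add: occurs_at_def)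

lemma occurs_at_hd: "occurs_at w p \<Longrightarrow> w \<noteq> [] \<Longrightarrow> tribonacci p = hd w"
  by (cases w) (auto simp: occurs_at_Cons)

lemma occurs_at_last:
  assumes "occurs_at w p" "w \<noteq> []"
  shows "tribonacci (p + length w - 1) = last w"
proof -
  have "occurs_at [last w] (p + length (butlast w))"
    using assms occurs_at_append[of "butlast w" "[last w]" p] by simp
  moreover have "p + length (butlast w) = p + length w - 1"
    using assms(2) by (cases w) simp_all
  ultimately show ?thesis
    by (simp add: occurs_at_Cons)
qed

lemma occurs_at_less_3: "occurs_at w p \<Longrightarrow> \<forall>a\<in>set w. a < 3"
  by (metis occurs_at_def imageE list.set_map tribonacci_less_3)

lemma occurs_at_prefix:
  assumes "occurs_at u p" "occurs_at v p" "length u \<le> length v"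
  shows "\<exists>z. v = u @ z"
proof -
  have "take (length u) v = map tribonacci (take (length u) [p..<p + length v])"
    using assms(2) by (metis occurs_at_def take_map)
  also have "\<dots> = u"
    using assms(1,3) by (simp add: occurs_at_def take_upt)
  finally show ?thesis
    by (metis append_take_drop_id)
qed

lemma occurs_at_snoc_0:
  assumes "occurs_at w p" "w \<noteq> []" "last w \<noteq> 0"
  shows "occurs_at (w @ [0]) p"
proof -
  have "tribonacci (Suc (p + length w - 1)) = 0"
    using occurs_at_last[OF assms(1,2)] assms(3) by (intro tribonacci_nonzero_Suc) simp
  with assms show ?thesis
    by (simp add: occurs_at_append occurs_at_Cons)
qed

lemma occurs_at_Cons_0:
  assumes "occurs_at w p" "w \<noteq> []" "hd w \<noteq> 0"
  shows "0 < p \<and> occurs_at (0 # w) (p - 1)"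
  using assms tribonacci_nonzero_pred[of p] by (simp add: occurs_at_Cons occurs_at_hd)

lemma img_pos_1_add:
  "occurs_at x p \<Longrightarrow> img_pos 1 (p + length x) = img_pos 1 p + length (trib_apply x)"
  using img_pos_add(1)[of 1 p "length x"] by (simp add: occurs_at_def)

lemma occurs_at_trib_apply:
  assumes "occurs_at v q"
  shows "occurs_at (trib_apply v @ [0]) (img_pos 1 q)"
proof -
  have "map tribonacci [img_pos 1 q..<img_pos 1 (q + length v)] = trib_apply v"
    using assms img_pos_add(2)[of 1 q "length v"] by (simp add: occurs_at_def)
  with img_pos_1_add[OF assms] tribonacci_img_pos_1[of "q + length v"] show ?thesis
    by (simp add: occurs_at_append occurs_at_def)
qed

lemma occurs_at_trib_apply_iff:
  assumes "\<forall>a\<in>set v. a < 3"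
  shows "occurs_at (trib_apply v @ [0]) (img_pos 1 q) \<longleftrightarrow> occurs_at v q"
proof
  assume occ: "occurs_at (trib_apply v @ [0]) (img_pos 1 q)"
  define y where "y = map tribonacci [q..<q + length (trib_apply v)]"
  have occ_y: "occurs_at y q" "occurs_at (trib_apply y @ [0]) (img_pos 1 q)"
    unfolding y_def by (rule occurs_at_map_tribonacci, rule occurs_at_trib_apply[OF occurs_at_map_tribonacci])
  have "length (trib_apply v @ [0]) \<le> length (trib_apply y @ [0])"
    using length_trib_apply_ge[of y] by (simp add: y_def)
  then obtain z where "trib_apply y @ [0] = trib_apply v @ [0] @ z"
    using occurs_at_prefix[OF occ occ_y(2)] by auto
  then obtain z' where "y = v @ z'"
    using trib_apply_snoc_0_prefix assms occurs_at_less_3[OF occ_y(1)] by blast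
  with occ_y(1) show "occurs_at v q"
    by (simp add: occurs_at_append)
qed (rule occurs_at_trib_apply)

section \<open>Desubstitution\<close>

text \<open>The final 0 may be missing only if \<open>w\<close> ends in a nonzero letter, which in \<open>t\<close> is
  always followed by 0.\<close>
definition desubst :: "nat list \<Rightarrow> nat list \<Rightarrow> bool" where
  "desubst w' w \<longleftrightarrow> w = trib_apply w' @ [0] \<or> w = trib_apply w' \<and> last w \<noteq> 0"

lemma desubstitute:
  assumes "occurs_at w p" "w \<noteq> []" "hd w = 0"
  obtains q w' where "p = img_pos 1 q" "occurs_at w' q" "desubst w' w"
proof -
  obtain q where q: "p = img_pos 1 q"
    using occurs_at_hd[OF assms(1,2)] assms(3) tribonacci_eq_0_iff by auto
  have w: "w = map tribonacci [p..<p + length w]"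
    using assms(1) by (simp add: occurs_at_def)
  have last: "tribonacci (p + length w - 1) = last w"
    by (rule occurs_at_last[OF assms(1,2)])
  obtain q' where q': "p + length w - (if last w = 0 then 1 else 0) = img_pos 1 q'"
    using last assms(2) tribonacci_eq_0_iff tribonacci_nonzero_Suc[of "p + length w - 1"]
    by (cases "last w = 0") auto
  have "p \<le> img_pos 1 q'"
    using q' assms(2) by (cases w) (auto split: if_splits)
  then have "q \<le> q'"
    using q strict_mono_less_eq[OF strict_mono_img_pos] by auto
  then have image: "map tribonacci [p..<p + length w - (if last w = 0 then 1 else 0)]
      = trib_apply (map tribonacci [q..<q'])"
    unfolding q' unfolding q by (rule tribonacci_segment)
  have "desubst (map tribonacci [q..<q']) w"
  proof (cases "last w = 0")
    case True
    have "[p..<p + length w] = [p..<p + length w - 1] @ [p + length w - 1]"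
      using assms(2) by (cases w) simp_all
    with w image last True show ?thesis
      by (simp add: desubst_def)
  next
    case False
    with w image show ?thesis
      by (simp add: desubst_def)
  qed
  with q \<open>q \<le> q'\<close> occurs_at_map_tribonacci[of q "q' - q"] show ?thesis
    by (intro that) auto
qed

lemma desubst_last:
  assumes "desubst w' w" "w = trib_apply w'" "w' \<noteq> []"
  shows "last w' \<noteq> 2"
proof
  assume "last w' = 2"
  with assms(3) have "last (trib_apply w') = 0"
    by (simp add: last_trib_apply)
  with assms(1,2) show False
    by (simp add: desubst_def)
qed

lemma occurs_at_desubst:
  assumes "desubst w' w" "w' \<noteq> []"
  shows "occurs_at w p \<longleftrightarrow> occurs_at (trib_apply w' @ [0]) p"
  using assms(1) unfolding desubst_def
proof
  assume "w = trib_apply w' \<and> last w \<noteq> 0"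
  moreover from this have "w \<noteq> []"
    using assms(2) by simp
  ultimately have "occurs_at w p \<longleftrightarrow> occurs_at (w @ [0]) p"
    using occurs_at_snoc_0[of w p] occurs_at_append[of w "[0]" p] by blast
  with \<open>w = trib_apply w' \<and> last w \<noteq> 0\<close> show ?thesis
    by simp
qed simp

lemma occurs_at_desubst_img_pos:
  assumes "desubst w' w" "w' \<noteq> []" "\<forall>a\<in>set w'. a < 3"
  shows "occurs_at w p \<longleftrightarrow> (\<exists>q. p = img_pos 1 q \<and> occurs_at w' q)"
proof
  assume "occurs_at w p"
  then have occ: "occurs_at (trib_apply w' @ [0]) p"
    using occurs_at_desubst[OF assms(1,2)] by simp
  obtain u where "trib_apply w' @ [0] = 0 # u"
    using trib_apply_snoc_0 by blast
  with occ obtain q where "p = img_pos 1 q"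
    using tribonacci_eq_0_iff by (auto simp: occurs_at_Cons)
  with occ show "\<exists>q. p = img_pos 1 q \<and> occurs_at w' q"
    using occurs_at_trib_apply_iff[OF assms(3)] by auto
next
  assume "\<exists>q. p = img_pos 1 q \<and> occurs_at w' q"
  then show "occurs_at w p"
    using occurs_at_trib_apply occurs_at_desubst[OF assms(1,2)] by auto
qed

lemma length_desubst_less:
  assumes "desubst w' w" "w' \<noteq> []" "\<forall>a\<in>set w'. a < 3"
  shows "length w' < length w"
proof (cases "w = trib_apply w'")
  case True
  then have "last w' \<in> set (filter (\<lambda>a. a \<noteq> 2) w')"
    using desubst_last[OF assms(1)] assms(2) by simp
  then have "0 < length (filter (\<lambda>a. a \<noteq> 2) w')"
    by (rule length_pos_if_in_set)
  with True show ?thesis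
    using length_trib_apply[OF assms(3)] by simp
next
  case False
  with assms(1) show ?thesis
    using length_trib_apply_ge[of w'] by (auto simp: desubst_def)
qed

lemma desubst_Cons_0_same_length:
  assumes "desubst w' (0 # w)" "w' \<noteq> []" "\<forall>a\<in>set w'. a < 3"
    and "w \<noteq> []" "hd w \<noteq> 0" "length w' = length w"
  shows "w' = [0] \<and> w = [1] \<or> w' = [1] \<and> w = [2]"
proof -
  obtain a l where w': "w' = a # l"
    using assms(2) by (cases w') auto
  have "a \<noteq> 2"
  proof
    assume "a = 2"
    then have "w = trib_apply l @ [0] \<or> w = trib_apply l"
      using assms(1) w' by (auto simp: desubst_def)
    then show False
      using assms(4,5) trib_apply_hd[of l] by (cases "l = []") auto
  qed
  have len: "length (trib_apply w') = length w + length (filter (\<lambda>a. a \<noteq> 2) w')"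
    using length_trib_apply[OF assms(3)] assms(6) by simp
  have "0 # w \<noteq> trib_apply w' @ [0]"
  proof
    assume "0 # w = trib_apply w' @ [0]"
    then have "length (0 # w) = length (trib_apply w' @ [0])"
      by (rule arg_cong)
    with len w' \<open>a \<noteq> 2\<close> show False
      by simp
  qed
  then have "0 # w = trib_apply w'"
    using assms(1) by (simp add: desubst_def)
  then have "length (0 # w) = length (trib_apply w')"
    by (rule arg_cong)
  with len w' \<open>a \<noteq> 2\<close> have "filter (\<lambda>a. a \<noteq> 2) l = []"
    by simp
  moreover from \<open>0 # w = trib_apply w'\<close> have "last w' \<noteq> 2"
    using desubst_last[OF assms(1)] assms(2) by simp
  ultimately have "l = []"
    using w' by (cases l rule: rev_cases) auto
  moreover have "a = 0 \<or> a = 1"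
    using \<open>a \<noteq> 2\<close> assms(3) w' by auto
  ultimately show ?thesis
    using \<open>0 # w = trib_apply w'\<close> w' by auto
qed

section \<open>Anchored factors\<close>

definition anchored :: "nat list \<Rightarrow> nat \<Rightarrow> nat list \<Rightarrow> bool" where
  "anchored w n x \<longleftrightarrow>
     (\<forall>p. occurs_at w p \<longleftrightarrow> (\<exists>j. p = img_pos n j + length x)) \<and>
     (\<forall>j. occurs_at (x @ w) (img_pos n j))"

lemma anchored_image:
  assumes anchored: "anchored w' n x'" and "w' \<noteq> []" and desubst: "desubst w' w"
  shows "anchored w (Suc n) (trib_apply x')"
proof -
  have occurs': "occurs_at w' q \<longleftrightarrow> (\<exists>j. q = img_pos n j + length x')" for q
    using anchored by (simp add: anchored_def)
  have starts': "occurs_at (x' @ w') (img_pos n j)" for j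
    using anchored by (simp add: anchored_def)
  have letters: "\<forall>a\<in>set w'. a < 3"
    using occurs'[of "img_pos n 0 + length x'"] occurs_at_less_3 by blast
  have shift: "img_pos 1 (img_pos n j + length x') = img_pos (Suc n) j + length (trib_apply x')" for j
    using img_pos_1_add[of x' "img_pos n j"] starts'[of j] img_pos_Suc_level[of n j]
    by (simp add: occurs_at_append)
  have "occurs_at w p \<longleftrightarrow> (\<exists>j. p = img_pos (Suc n) j + length (trib_apply x'))" for p
    unfolding occurs_at_desubst_img_pos[OF desubst \<open>w' \<noteq> []\<close> letters] occurs' shift[symmetric]
    by blast
  moreover have "occurs_at (trib_apply x' @ w) (img_pos (Suc n) j)" for j
  proof -
    have "occurs_at (trib_apply x' @ trib_apply w' @ [0]) (img_pos (Suc n) j)"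
      using occurs_at_trib_apply[OF starts'[of j]] by (simp add: img_pos_Suc_level[of n j])
    with desubst show ?thesis
      by (auto simp: desubst_def occurs_at_append)
  qed
  ultimately show ?thesis
    by (simp add: anchored_def)
qed

lemma anchored_Cons_0:
  assumes "anchored (0 # w) n x" "w \<noteq> []" "hd w \<noteq> 0"
  shows "anchored w n (x @ [0])"
proof -
  have "occurs_at w p \<longleftrightarrow> (\<exists>j. p = Suc (img_pos n j + length x))" for p
  proof
    assume "occurs_at w p"
    then have "0 < p" "occurs_at (0 # w) (p - 1)"
      using occurs_at_Cons_0 assms(2,3) by blast+
    moreover obtain j where "p - 1 = img_pos n j + length x"
      using calculation(2) assms(1) by (auto simp: anchored_def)
    ultimately show "\<exists>j. p = Suc (img_pos n j + length x)"
      by (intro exI[of _ j]) simp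
  next
    assume "\<exists>j. p = Suc (img_pos n j + length x)"
    then obtain j where p: "p = Suc (img_pos n j + length x)"
      by blast
    then have "occurs_at (0 # w) (p - 1)"
      using assms(1) by (auto simp: anchored_def)
    with p show "occurs_at w p"
      by (simp add: occurs_at_Cons)
  qed
  with assms(1) show ?thesis
    by (simp add: anchored_def)
qed

text \<open>The bonus makes the desubstitutions of \<open>[1]\<close> into \<open>[0]\<close> and of \<open>[2]\<close> into \<open>[1]\<close>
  decreasing.\<close>
definition factor_weight :: "nat list \<Rightarrow> nat" where
  "factor_weight w = 3 * length w + (if w = [2] then 2 else if w = [1] then 1 else 0)"

lemma factor_weight_desubst_less:
  assumes "desubst w' (if hd w = 0 then w else 0 # w)" "w' \<noteq> []" "\<forall>a\<in>set w'. a < 3" "w \<noteq> []"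
  shows "factor_weight w' < factor_weight w"
proof (cases "length w' < length w")
  case True
  then show ?thesis
    by (auto simp: factor_weight_def)
next
  case False
  with length_desubst_less[OF assms(1-3)] have "hd w \<noteq> 0" "length w' = length w"
    by (auto split: if_splits)
  with assms have "w' = [0] \<and> w = [1] \<or> w' = [1] \<and> w = [2]"
    by (intro desubst_Cons_0_same_length) simp_all
  then show ?thesis
    by (auto simp: factor_weight_def)
qed

lemma anchored_desubstitution:
  assumes "occurs_at w i" "w \<noteq> []" "w \<noteq> [0]"
  obtains w' q where "occurs_at w' q" "w' \<noteq> []" "factor_weight w' < factor_weight w"
    "\<And>n x'. anchored w' n x' \<Longrightarrow> \<exists>x. anchored w (Suc n) x"
proof -
  define w0 where "w0 = (if hd w = 0 then w else 0 # w)"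
  have "occurs_at w0 (if hd w = 0 then i else i - 1)"
    using assms occurs_at_Cons_0[OF assms(1,2)] by (cases "hd w = 0") (simp_all add: w0_def)
  moreover have "w0 \<noteq> []" "hd w0 = 0"
    using assms(2) by (auto simp: w0_def)
  ultimately obtain q w' where w': "occurs_at w' q" "desubst w' w0"
    by (rule desubstitute)
  have "w' \<noteq> []"
  proof
    assume "w' = []"
    with w'(2) \<open>w0 \<noteq> []\<close> have "w0 = [0]"
      by (auto simp: desubst_def)
    with assms(2,3) show False
      by (auto simp: w0_def split: if_splits)
  qed
  have "factor_weight w' < factor_weight w"
    using w'(2)[unfolded w0_def] \<open>w' \<noteq> []\<close> occurs_at_less_3[OF w'(1)] assms(2)
    by (rule factor_weight_desubst_less)
  moreover have "\<exists>x. anchored w (Suc n) x" if "anchored w' n x'" for n x'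
  proof -
    have "anchored w0 (Suc n) (trib_apply x')"
      using anchored_image[OF that \<open>w' \<noteq> []\<close> w'(2)] .
    then show ?thesis
      using anchored_Cons_0 assms(2) by (cases "hd w = 0") (auto simp: w0_def)
  qed
  ultimately show ?thesis
    using that w'(1) \<open>w' \<noteq> []\<close> by blast
qed

lemma anchored_exists:
  assumes "occurs_at w i" "w \<noteq> []"
  shows "\<exists>n x. 1 \<le> n \<and> (w \<noteq> [0] \<longrightarrow> 2 \<le> n) \<and> anchored w n x"
  using assms
proof (induction w arbitrary: i rule: measure_induct_rule[where f = factor_weight])
  case (less w)
  show ?case
  proof (cases "w = [0]")
    case True
    have "anchored [0] 1 []"
      by (auto simp: anchored_def occurs_at_Cons tribonacci_eq_0_iff)
    with True show ?thesis
      by blast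
  next
    case False
    obtain w' q where "occurs_at w' q" "w' \<noteq> []" "factor_weight w' < factor_weight w"
      and lift: "\<And>n x'. anchored w' n x' \<Longrightarrow> \<exists>x. anchored w (Suc n) x"
      using anchored_desubstitution[OF less.prems False] by blast
    then obtain n x' where "1 \<le> n" "anchored w' n x'"
      using less.IH by blast
    with lift show ?thesis
      by (metis Suc_le_mono le_SucI one_add_one plus_1_eq_Suc)
  qed
qed

section \<open>Unbalanced windows\<close>

lemma occ_eq_length_filter:
  assumes "length w \<le> length u"
  shows "occ u w = length (filter (\<lambda>j. take (length w) (drop j u) = w) [0..<Suc (length u - length w)])"
proof -
  have "{j. j + length w \<le> length u \<and> take (length w) (drop j u) = w}
      = set (filter (\<lambda>j. take (length w) (drop j u) = w) [0..<Suc (length u - length w)])"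
    using assms by (auto simp del: upt_Suc)
  then show ?thesis
    unfolding occ_def by (simp only: distinct_card distinct_filter distinct_upt)
qed

lemma occ_map_tribonacci:
  "occ (map tribonacci [a..<a + L]) w = card {j. j + length w \<le> L \<and> occurs_at w (a + j)}"
proof -
  have "take (length w) (drop j (map tribonacci [a..<a + L]))
      = map tribonacci [a + j..<a + j + length w]" if "j + length w \<le> L" for j
    using that by (simp add: drop_map take_map take_upt add.assoc)
  then show ?thesis
    unfolding occ_def occurs_at_def by (intro arg_cong[where f = card]) auto
qed

lemma length_funpow_trib_apply_gap:
  assumes "2 \<le> n"
  shows "length ((trib_apply ^^ n) [2]) + 2 \<le> length ((trib_apply ^^ n) [0])"
proof -
  obtain m where n: "n = Suc (Suc m)"
    using assms by (metis add_2_eq_Suc le_Suc_ex)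
  have image: "(trib_apply ^^ n) [c] = (trib_apply ^^ m) (trib_apply (trib_apply [c]))" for c
    by (simp add: n funpow_Suc_right del: funpow.simps)
  have "(trib_apply ^^ n) [0] = (trib_apply ^^ m) [0, 1] @ (trib_apply ^^ m) [0, 2]"
    using image[of 0] funpow_trib_apply_append[of m "[0, 1]" "[0, 2]"] by simp
  moreover have "(trib_apply ^^ n) [2] = (trib_apply ^^ m) [0, 1]"
    using image[of 2] by simp
  ultimately show ?thesis
    using length_funpow_trib_apply_ge[of "[0, 2]" m] by simp
qed

lemma tribonacci_0_3: "tribonacci 0 = 0" "tribonacci 3 = 2"
proof -
  have "trib_iter 2 = [0, 1, 0, 2]"
    by (simp add: trib_iter_def numeral_2_eq_2 trib_apply_def)
  then show "tribonacci 0 = 0" "tribonacci 3 = 2"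
    using tribonacci_eq_trib_iter_nth[where m = 2] by simp_all
qed

lemma anchored_no_occurrence:
  assumes "anchored w n x" "2 \<le> n" "j \<le> length ((trib_apply ^^ n) [2])"
  shows "\<not> occurs_at w (Suc (length x) + j)"
proof
  assume "occurs_at w (Suc (length x) + j)"
  then obtain i where i: "img_pos n i = Suc j"
    using assms(1) by (auto simp: anchored_def)
  then have "1 \<le> i"
    by (cases i) auto
  then have "img_pos n 1 \<le> img_pos n i"
    using strict_mono_less_eq[OF strict_mono_img_pos] by blast
  moreover have "img_pos n 1 = length ((trib_apply ^^ n) [0])"
    using img_pos_Suc[of n 0] tribonacci_0_3 by simp
  ultimately show False
    using i assms(3) length_funpow_trib_apply_gap[OF assms(2)] by simp
qed

text \<open>The occurrences of \<open>w\<close> in the blocks \<open>\<sigma>\<^sup>n(t\<^sub>3) = \<sigma>\<^sup>n(2)\<close> and \<open>\<sigma>\<^sup>n(t\<^sub>4)\<close> fit into one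
  window of length \<open>|\<sigma>\<^sup>n(2)| + |w|\<close>, while no occurrence starts in such a window one position
  after the occurrence in \<open>\<sigma>\<^sup>n(t\<^sub>0)\<close>.\<close>
lemma anchored_unbalanced:
  assumes "anchored w n x" "2 \<le> n"
  shows "\<exists>u\<in>factors tribonacci. \<exists>v\<in>factors tribonacci. length u = length v \<and> occ v w + 2 \<le> occ u w"
proof -
  define g where "g = length ((trib_apply ^^ n) [2])"
  define L where "L = g + length w"
  define a where "a = img_pos n 3 + length x"
  define b where "b = Suc (length x)"
  have "img_pos n 4 = img_pos n 3 + g"
    using img_pos_Suc[of n 3] tribonacci_0_3 by (simp add: g_def eval_nat_numeral)
  then have "a = img_pos n 3 + length x" "a + g = img_pos n 4 + length x"
    by (simp_all add: a_def)
  then have "occurs_at w a" "occurs_at w (a + g)"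
    using assms(1) by (auto simp: anchored_def)
  then have "{0, g} \<subseteq> {j. j + length w \<le> L \<and> occurs_at w (a + j)}"
    by (simp add: L_def)
  moreover have "finite {j. j + length w \<le> L \<and> occurs_at w (a + j)}"
    by (rule finite_subset[of _ "{..L}"]) auto
  moreover have "1 \<le> g"
    using length_funpow_trib_apply_ge[of "[2]" n] by (simp add: g_def)
  then have "card {0, g} = 2"
    by simp
  ultimately have "2 \<le> occ (map tribonacci [a..<a + L]) w"
    by (metis card_mono occ_map_tribonacci)
  moreover have "{j. j + length w \<le> L \<and> occurs_at w (b + j)} = {}"
    using anchored_no_occurrence[OF assms] by (auto simp: L_def b_def g_def)
  then have "occ (map tribonacci [b..<b + L]) w = 0"
    by (simp only: occ_map_tribonacci card.empty)
  ultimately show ?thesis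
    using map_tribonacci_in_factors
    by (intro bexI[of _ "map tribonacci [a..<a + L]"] bexI[of _ "map tribonacci [b..<b + L]"])
      simp_all
qed

lemma tribonacci_zero_unbalanced:
  "\<exists>u\<in>factors tribonacci. \<exists>v\<in>factors tribonacci. length u = length v \<and> occ v [0] + 2 \<le> occ u [0]"
proof -
  have len: "52 \<le> length (trib_iter 7)"
    by (simp add: trib_iter_def eval_nat_numeral trib_apply_def)
  have "map tribonacci [43..<52] = drop 43 (take 52 (trib_iter 7))"
    "map tribonacci [8..<17] = drop 8 (take 17 (trib_iter 7))"
    by (rule map_tribonacci_eq_trib_iter; use len in linarith)+
  then have "map tribonacci [43..<52] = [0, 0, 1, 0, 2, 0, 1, 0, 0]"
    "map tribonacci [8..<17] = [1, 0, 2, 0, 1, 0, 1, 0, 2]"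
    by (simp_all add: trib_iter_def eval_nat_numeral trib_apply_def)
  moreover have "occ [0, 0, 1, 0, 2, 0, 1, 0, 0] [0::nat] = 6" "occ [1, 0, 2, 0, 1, 0, 1, 0, 2] [0::nat] = 4"
    by (simp_all add: occ_eq_length_filter)
  ultimately show ?thesis
    using map_tribonacci_in_factors[of 43 9] map_tribonacci_in_factors[of 8 9]
    by (intro bexI[of _ "map tribonacci [43..<52]"] bexI[of _ "map tribonacci [8..<17]"]) simp_all
qed

theorem theorem23:
  fixes k :: nat
  assumes "k \<ge> 1"
  shows "totally_unbalanced k 1 tribonacci"
  unfolding totally_unbalanced_def
proof (intro ballI impI)
  fix w
  assume "w \<in> factors tribonacci" "length w = k"
  then obtain i where "occurs_at w i"
    by (auto simp: factors_tribonacci_iff)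
  have "w \<noteq> []"
    using assms \<open>length w = k\<close> by auto
  have "\<exists>u\<in>factors tribonacci. \<exists>v\<in>factors tribonacci.
      length u = length v \<and> occ v w + 2 \<le> occ u w"
  proof (cases "w = [0]")
    case True
    then show ?thesis
      using tribonacci_zero_unbalanced by simp
  next
    case False
    then obtain n x where "2 \<le> n" "anchored w n x"
      using anchored_exists[OF \<open>occurs_at w i\<close> \<open>w \<noteq> []\<close>] by blast
    then show ?thesis
      by (rule anchored_unbalanced[rotated])
  qed
  then obtain u v where "u \<in> factors tribonacci" "v \<in> factors tribonacci"
    "length u = length v" "occ v w + 2 \<le> occ u w"
    by blast
  then show "\<exists>u\<in>factors tribonacci. \<exists>v\<in>factors tribonacci.
      length u = length v \<and> \<bar>int (occ u w) - int (occ v w)\<bar> > int 1"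
    by (intro bexI[of _ u] bexI[of _ v]) auto
qed

end
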